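(* Let $K\subset(-1,0)$ be compact and fix an integer $s$. For natural numbers $N\ge 2$ and $1\le a\le N-1$, let $b_{N,a}\colon K\to\mathbb{R}$ be real-valued functions, and suppose \[ \sup\{\,|b_{N,a}(q)| : N\ge 2,\ 1\le a\le N-1,\ q\in K\,\}<\infty. \] Then \[ \sup_{q\in K}\left|\sum_{a=1}^{N-1}\binom{N}{a}\, b_{N,a}(q)\, q^{a(N-a)+s}\right|\longrightarrow 0\qquad\text{as } N\to\infty. \] *)

theory Defs
  imports "HOL-Analysis.Analysis"
begin

end

theory Submission
  imports Defs
begin

text \<open>Let \<open>r < 1\<close> bound \<open>\<bar>q\<bar>\<close> on \<open>K\<close> and \<open>\<rho> = sqrt r\<close>. Since \<open>\<bar>q\<bar> powi s\<close> and \<open>b\<close> are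
  bounded on \<open>K\<close>, it suffices that \<open>\<Sum>a. (N choose a) * \<rho>^(2a(N-a))\<close> tends to \<open>0\<close>. With
  \<open>k = min a (N - a)\<close> we have \<open>N choose a \<le> N^k\<close> and \<open>2a(N-a) \<ge> kN\<close>, so the \<open>a\<close>-th term is
  at most \<open>(N \<rho>^N)^k \<le> N \<rho>^N\<close> as soon as \<open>N \<rho>^N \<le> 1\<close>; the whole sum is then at most
  \<open>N^2 \<rho>^N\<close>, which tends to \<open>0\<close>.\<close>

lemma binomial_times_power_le:
  fixes \<rho> :: real
  assumes "1 \<le> a" "a < N" "0 \<le> \<rho>" "\<rho> \<le> 1" "real N * \<rho>^N \<le> 1"
  shows "real (N choose a) * \<rho>^(2*(a*(N-a))) \<le> real N * \<rho>^N"
proof -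
  define k where "k = min a (N-a)"
  have k1: "1 \<le> k" and kN: "2*k \<le> N" using assms unfolding k_def by auto
  have choose_eq: "N choose a = N choose k"
    unfolding k_def using assms binomial_symmetric[of a N] by (auto simp: min_def)
  have exp_eq: "a*(N-a) = k*(N-k)" unfolding k_def using assms by (auto simp: min_def mult.commute)
  have "k*N \<le> k*(2*(N-k))" using kN by (intro mult_le_mono2) linarith
  then have "k*N \<le> 2*(k*(N-k))" by (simp add: ac_simps)
  then have power_le: "\<rho>^(2*(a*(N-a))) \<le> (\<rho>^N)^k"
    unfolding exp_eq power_mult[symmetric] by (metis assms(3,4) mult.commute power_decreasing)
  have "N choose k \<le> N ^ k" using binomial_le_pow[of k N] kN by linarith
  then have choose_le: "real (N choose k) \<le> real N ^ k" by (metis of_nat_le_iff of_nat_power)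
  have "real (N choose a) * \<rho>^(2*(a*(N-a))) \<le> real N ^ k * (\<rho>^N)^k"
    unfolding choose_eq by (rule mult_mono[OF choose_le power_le]) auto
  also have "\<dots> = (real N * \<rho>^N)^k" by (simp add: power_mult_distrib)
  also have "\<dots> \<le> (real N * \<rho>^N)^1"
    by (rule power_decreasing) (use k1 assms in auto)
  finally show ?thesis by simp
qed

lemma sum_binomial_times_power_le:
  fixes \<rho> :: real
  assumes "0 \<le> \<rho>" "\<rho> \<le> 1" "real N * \<rho>^N \<le> 1"
  shows "(\<Sum>a = 1..N - 1. real (N choose a) * \<rho>^(2*(a*(N-a)))) \<le> real N ^ 2 * \<rho>^N"
proof -
  have "(\<Sum>a = 1..N - 1. real (N choose a) * \<rho>^(2*(a*(N-a)))) \<le> (\<Sum>a = 1..N - 1. real N * \<rho>^N)"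
    using assms by (intro sum_mono binomial_times_power_le) auto
  also have "\<dots> = real (N - 1) * (real N * \<rho>^N)" by simp
  also have "\<dots> \<le> real N * (real N * \<rho>^N)"
    using assms by (intro mult_right_mono) auto
  finally show ?thesis by (simp add: power2_eq_square)
qed

lemma square_times_power_tendsto_zero:
  fixes \<rho> :: real
  assumes "0 \<le> \<rho>" "\<rho> < 1"
  shows "(\<lambda>N. real N ^ 2 * \<rho>^N) \<longlonglongrightarrow> 0"
proof -
  define \<sigma> where "\<sigma> = sqrt \<rho>"
  have "(\<lambda>N. real N * \<sigma>^N) \<longlonglongrightarrow> 0"
    using powser_times_n_limit_0[of \<sigma>] assms unfolding \<sigma>_def by simp
  then have "(\<lambda>N. (real N * \<sigma>^N)^2) \<longlonglongrightarrow> 0"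
    using tendsto_power[of _ 0 _ 2] by simp
  moreover have "(real N * \<sigma>^N)^2 = real N ^ 2 * \<rho>^N" for N
  proof -
    have "(\<sigma>^N)^2 = (\<sigma>^2)^N" by (simp flip: power_mult add: mult.commute)
    then show ?thesis using assms by (simp add: \<sigma>_def power_mult_distrib)
  qed
  ultimately show ?thesis by simp
qed

lemma sum_binomial_times_power_tendsto_zero:
  fixes r :: real
  assumes "0 \<le> r" "r < 1"
  shows "(\<lambda>N. \<Sum>a = 1..N - 1. real (N choose a) * r^(a*(N-a))) \<longlonglongrightarrow> 0"
proof -
  define \<rho> where "\<rho> = sqrt r"
  have \<rho>: "0 \<le> \<rho>" "\<rho> < 1" "r = \<rho>^2" unfolding \<rho>_def using assms by auto
  have "(\<lambda>N. real N * \<rho>^N) \<longlonglongrightarrow> 0" using powser_times_n_limit_0[of \<rho>] \<rho>(1,2) by simp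
  then have "\<forall>\<^sub>F N in sequentially. real N * \<rho>^N < 1" by (rule order_tendstoD(2)) simp
  then have upper: "\<forall>\<^sub>F N in sequentially.
      (\<Sum>a = 1..N - 1. real (N choose a) * r^(a*(N-a))) \<le> real N ^ 2 * \<rho>^N"
  proof eventually_elim
    case (elim N)
    then show ?case
      using sum_binomial_times_power_le[of \<rho> N] \<rho>(1,2) unfolding \<rho>(3) power_mult by simp
  qed
  have lower: "\<forall>\<^sub>F N in sequentially. 0 \<le> (\<Sum>a = 1..N - 1. real (N choose a) * r^(a*(N-a)))"
    using assms by (intro always_eventually allI sum_nonneg) simp
  show ?thesis
    by (rule tendsto_sandwich[OF lower upper tendsto_const square_times_power_tendsto_zero[OF \<rho>(1,2)]])
qed

lemma compact_subset_interval_bounds: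
  fixes K :: "real set"
  assumes "compact K" "K \<subseteq> {-1<..<0}"
  obtains m r where "0 < m" "0 \<le> r" "r < 1" "\<And>q. q \<in> K \<Longrightarrow> m \<le> \<bar>q\<bar> \<and> \<bar>q\<bar> \<le> r"
proof (cases "K = {}")
  case True
  then show ?thesis using that[of 1 0] by simp
next
  case False
  obtain q0 where q0: "q0 \<in> K" "\<And>q. q \<in> K \<Longrightarrow> q0 \<le> q"
    using compact_attains_inf[OF assms(1) False] by blast
  obtain q1 where q1: "q1 \<in> K" "\<And>q. q \<in> K \<Longrightarrow> q \<le> q1"
    using compact_attains_sup[OF assms(1) False] by blast
  have "0 < \<bar>q1\<bar>" "0 \<le> \<bar>q0\<bar>" "\<bar>q0\<bar> < 1" using q0(1) q1(1) assms(2) by auto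
  moreover have "\<bar>q1\<bar> \<le> \<bar>q\<bar> \<and> \<bar>q\<bar> \<le> \<bar>q0\<bar>" if "q \<in> K" for q
    using q0 q1 that assms(2) by fastforce
  ultimately show ?thesis by (rule that)
qed

lemma power_int_le_inverse_power:
  fixes q m :: real and s :: int
  assumes "0 < m" "m \<le> q" "q \<le> 1"
  shows "q powi s \<le> (1/m) ^ nat \<bar>s\<bar>"
proof (cases "s \<ge> 0")
  case True
  have "q ^ nat s \<le> 1" using assms by (simp add: power_le_one)
  moreover have "1 \<le> (1/m) ^ nat \<bar>s\<bar>" using assms by (simp add: one_le_power)
  ultimately show ?thesis using True by (simp add: power_int_def)
next
  case False
  have "inverse q \<le> 1/m" using assms by (simp add: divide_simps)
  then have "inverse q ^ nat (-s) \<le> (1/m) ^ nat (-s)"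
    by (rule power_mono) (use assms in auto)
  then show ?thesis using False by (simp add: power_int_def)
qed

lemma abs_binomial_times_power_int_le:
  fixes q m r \<beta> C :: real and s :: int
  assumes "0 < m" "m \<le> \<bar>q\<bar>" "\<bar>q\<bar> \<le> r" "r \<le> 1" "\<bar>\<beta>\<bar> \<le> C"
  shows "\<bar>real (N choose a) * \<beta> * q powi (int k + s)\<bar> \<le> C * (1/m) ^ nat \<bar>s\<bar> * (real (N choose a) * r ^ k)"
proof -
  have "q \<noteq> 0" "0 \<le> r" using assms(1-3) by auto
  have q_le: "\<bar>q\<bar> ^ k \<le> r ^ k" using assms(3) by (intro power_mono) auto
  have powi_le: "\<bar>q\<bar> powi s \<le> (1/m) ^ nat \<bar>s\<bar>"
    using assms by (intro power_int_le_inverse_power) auto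
  have "\<bar>real (N choose a) * \<beta> * q powi (int k + s)\<bar>
      = real (N choose a) * \<bar>\<beta>\<bar> * (\<bar>q\<bar> ^ k * \<bar>q\<bar> powi s)"
    using \<open>q \<noteq> 0\<close> by (simp add: abs_mult power_int_abs power_int_add power_abs del: of_nat_mult)
  also have "\<dots> \<le> real (N choose a) * C * (r ^ k * (1/m) ^ nat \<bar>s\<bar>)"
    using assms(5) \<open>0 \<le> r\<close> q_le powi_le by (intro mult_mono mult_left_mono) auto
  finally show ?thesis by (simp add: ac_simps)
qed

lemma eventually_uniform_abs_sum_le:
  fixes f :: "'i \<Rightarrow> 'a \<Rightarrow> 'b \<Rightarrow> real"
  assumes lim: "((\<lambda>i. \<Sum>a\<in>A i. g i a) \<longlongrightarrow> 0) F"
    and dom: "\<And>i a x. a \<in> A i \<Longrightarrow> x \<in> X \<Longrightarrow> \<bar>f i a x\<bar> \<le> g i a"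
    and "\<epsilon> > 0"
  shows "\<forall>\<^sub>F i in F. \<forall>x\<in>X. \<bar>\<Sum>a\<in>A i. f i a x\<bar> \<le> \<epsilon>"
proof -
  have "\<forall>\<^sub>F i in F. (\<Sum>a\<in>A i. g i a) < \<epsilon>" using lim \<open>\<epsilon> > 0\<close> by (rule order_tendstoD(2))
  then show ?thesis
  proof eventually_elim
    case (elim i)
    show ?case
    proof
      fix x assume "x \<in> X"
      have "\<bar>\<Sum>a\<in>A i. f i a x\<bar> \<le> (\<Sum>a\<in>A i. \<bar>f i a x\<bar>)" by (rule sum_abs)
      also have "\<dots> \<le> (\<Sum>a\<in>A i. g i a)" using dom \<open>x \<in> X\<close> by (intro sum_mono)
      finally show "\<bar>\<Sum>a\<in>A i. f i a x\<bar> \<le> \<epsilon>" using elim by linarith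
    qed
  qed
qed

theorem lemma2p3:
  fixes K :: "real set" and s :: int and b :: "nat \<Rightarrow> nat \<Rightarrow> real \<Rightarrow> real"
  assumes "compact K" and "K \<subseteq> {-1<..<0}"
    and "\<exists>C. \<forall>N a q. 2 \<le> N \<longrightarrow> 1 \<le> a \<longrightarrow> a \<le> N - 1 \<longrightarrow> q \<in> K \<longrightarrow> \<bar>b N a q\<bar> \<le> C"
  shows "\<forall>\<epsilon>>0. \<forall>\<^sub>F N in sequentially. \<forall>q\<in>K.
           \<bar>\<Sum>a = 1..N - 1. real (N choose a) * b N a q * q powi (int (a * (N - a)) + s)\<bar> \<le> \<epsilon>"
proof (intro allI impI)
  fix \<epsilon> :: real assume "\<epsilon> > 0"
  obtain C where C: "\<And>N a q. 2 \<le> N \<Longrightarrow> 1 \<le> a \<Longrightarrow> a \<le> N - 1 \<Longrightarrow> q \<in> K \<Longrightarrow> \<bar>b N a q\<bar> \<le> C"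
    using assms(3) by blast
  obtain m r where "0 < m" "0 \<le> r" "r < 1" and mr: "\<And>q. q \<in> K \<Longrightarrow> m \<le> \<bar>q\<bar> \<and> \<bar>q\<bar> \<le> r"
    using compact_subset_interval_bounds[OF assms(1,2)] by blast
  define M where "M = \<bar>C\<bar> * (1/m) ^ nat \<bar>s\<bar>"
  have "(\<lambda>N. M * (\<Sum>a = 1..N - 1. real (N choose a) * r^(a*(N-a)))) \<longlonglongrightarrow> M * 0"
    using \<open>0 \<le> r\<close> \<open>r < 1\<close> by (intro tendsto_mult_left sum_binomial_times_power_tendsto_zero)
  then have "(\<lambda>N. \<Sum>a = 1..N - 1. M * (real (N choose a) * r^(a*(N-a)))) \<longlonglongrightarrow> 0"
    by (simp add: sum_distrib_left)
  moreover have "\<bar>real (N choose a) * b N a q * q powi (int (a * (N - a)) + s)\<bar>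
      \<le> M * (real (N choose a) * r^(a*(N-a)))" if "a \<in> {1..N - 1}" "q \<in> K" for N a q
  proof -
    have "\<bar>b N a q\<bar> \<le> \<bar>C\<bar>" using C[of N a q] that by force
    then show ?thesis unfolding M_def
      using mr[OF that(2)] \<open>0 < m\<close> \<open>r < 1\<close> by (intro abs_binomial_times_power_int_le) auto
  qed
  ultimately show "\<forall>\<^sub>F N in sequentially. \<forall>q\<in>K.
      \<bar>\<Sum>a = 1..N - 1. real (N choose a) * b N a q * q powi (int (a * (N - a)) + s)\<bar> \<le> \<epsilon>"
    using \<open>\<epsilon> > 0\<close> by (rule eventually_uniform_abs_sum_le)
qed

end
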